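(* Let $I\subset[0,+\infty)$ be an open interval, $n\in\mathbb{N}$, $\beta\in\{-1,1\}$, $N\ge n$, $\xi\in[0,1]$, $t_0\in I$ and $T>0$ fixed with $t_0+\beta T\in I$. Let $\{\varpi(\tau),\tau\ge0\}$ be a continuous parameter stochastic process whose mean value and variance functions are continuous and such that $\varpi(s)$ and $\varpi(t)$ are independent for all $s\neq t$, sampled with an equidistant sampling period $T_s$, $m=T/T_s\in\mathbb{N}$. If $\kappa,\mu>-\frac12$, then $e^{\beta T}_{\varpi,m}(t_0)$ converges in mean square to $\int_0^1p^{\beta T}(\tau)E[\varpi(t_0+\beta T\tau)]\,d\tau$ as $T_s\to0$. Moreover, if $E[\varpi(\tau)]=\sum_{i=0}^{n-1}\bar\nu_i\tau^i$ with $\bar\nu_i\in\mathbb{R}$, then $e^{\beta T}_{\varpi,m}(t_0)$ converges in mean square to $0$ as $T_s\to0$.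
   Context: For $a,b>-1$ let $w^{a,b}(t)=t^{b}(1-t)^{a}$, $P_k^{a,b}(t)=\sum_{s=0}^{k}\binom{k+a}{s}\binom{k+b}{k-s}(t-1)^{k-s}t^{s}$, $\|P_k^{a,b}\|^2=\int_0^1 w^{a,b}(P_k^{a,b})^2$. With $q=N-n$, the Jacobi estimator kernel is $$p^{\beta T}(\tau)=\frac{(-1)^n}{(\beta T)^n}\sum_{i=0}^{q}\frac{P_i^{\mu+n,\kappa+n}(\xi)}{\|P_i^{\mu+n,\kappa+n}\|^2}\frac{d^n}{d\tau^n}\Big[w^{\mu+n,\kappa+n}(\tau)P_i^{\mu+n,\kappa+n}(\tau)\Big].$$ Discrete noise error contribution: with nodes $t_i=i/m$ and quadrature weights $w_i/m$ ($i=0,\dots,m$) of a numerical integration method on $[0,1]$, $$e^{\beta T}_{\varpi,m}(t_0)=\sum_{i=0}^{m}\frac{w_i}{m}\,p^{\beta T}(t_i)\,\varpi(t_0+\beta Tt_i).$$ Standing assumptions on the rule: $w_i>0$ for $0<i<m$, $w_0,w_m\ge0$, with $w_0=0$ when $\kappa<0$ and $w_m=0$ when $\mu<0$; the weights are bounded uniformly in $i$ and $m$; and the rule is convergent for the integrands $(p^{\beta T})^2$ and $\tau\mapsto p^{\beta T}(\tau)E[\varpi(t_0+\beta T\tau)]$, i.e. the corresponding weighted sums tend to the integrals over $[0,1]$ as $m\to\infty$. *)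

theory Defs
  imports "HOL-Probability.Probability"
begin

text \<open>Real power with the convention 0^0 = 1 (Isabelle's powr has 0 powr 0 = 0).\<close>
definition rpow :: "real \<Rightarrow> real \<Rightarrow> real" where
  "rpow x a = (if x = 0 \<and> a = 0 then 1 else x powr a)"

definition jac_w :: "real \<Rightarrow> real \<Rightarrow> real \<Rightarrow> real" where
  "jac_w a b t = rpow t b * rpow (1 - t) a"

definition jac_P :: "real \<Rightarrow> real \<Rightarrow> nat \<Rightarrow> real \<Rightarrow> real" where
  "jac_P a b k t = (\<Sum>s=0..k. ((real k + a) gchoose s) * ((real k + b) gchoose (k - s))
                                * (t - 1) ^ (k - s) * t ^ s)"

definition jac_norm2 :: "real \<Rightarrow> real \<Rightarrow> nat \<Rightarrow> real" where
  "jac_norm2 a b k = integral {0..1} (\<lambda>t. jac_w a b t * (jac_P a b k t)^2)"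

fun nderiv01 :: "nat \<Rightarrow> (real \<Rightarrow> real) \<Rightarrow> real \<Rightarrow> real" where
  "nderiv01 0 f = f"
| "nderiv01 (Suc k) f = (\<lambda>x. vector_derivative (nderiv01 k f) (at x within {0..1}))"

definition jac_kernel :: "real \<Rightarrow> real \<Rightarrow> nat \<Rightarrow> nat \<Rightarrow> real \<Rightarrow> real \<Rightarrow> real \<Rightarrow> real \<Rightarrow> real" where
  "jac_kernel \<kappa> \<mu> n N \<xi> \<beta> T \<tau> =
     (-1) ^ n / (\<beta> * T) ^ n *
     (\<Sum>i=0..N - n. jac_P (\<mu> + n) (\<kappa> + n) i \<xi> / jac_norm2 (\<mu> + n) (\<kappa> + n) i *
        nderiv01 n (\<lambda>t. jac_w (\<mu> + n) (\<kappa> + n) t * jac_P (\<mu> + n) (\<kappa> + n) i t) \<tau>)"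

definition noise_err :: "(nat \<Rightarrow> nat \<Rightarrow> real) \<Rightarrow> (real \<Rightarrow> real) \<Rightarrow> (real \<Rightarrow> 'w \<Rightarrow> real)
    \<Rightarrow> real \<Rightarrow> real \<Rightarrow> real \<Rightarrow> nat \<Rightarrow> 'w \<Rightarrow> real" where
  "noise_err qw p X \<beta> T t0 m x =
     (\<Sum>i=0..m. qw m i / real m * p (real i / real m) * X (t0 + \<beta> * T * (real i / real m)) x)"

definition quad_conv :: "(nat \<Rightarrow> nat \<Rightarrow> real) \<Rightarrow> (real \<Rightarrow> real) \<Rightarrow> bool" where
  "quad_conv qw f \<longleftrightarrow>
     (\<lambda>m. \<Sum>i=0..m. qw m i / real m * f (real i / real m)) \<longlonglongrightarrow> integral {0..1} f"

definition ms_conv :: "'w measure \<Rightarrow> (nat \<Rightarrow> 'w \<Rightarrow> real) \<Rightarrow> real \<Rightarrow> bool" where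
  "ms_conv M X L \<longleftrightarrow> (\<lambda>m. prob_space.expectation M (\<lambda>x. (X m x - L)^2)) \<longlonglongrightarrow> 0"

end

theory Submission
  imports Defs "HOL-Computational_Algebra.Polynomial"
begin

text \<open>
  The mean-square error of the quadrature sum splits into a variance part and a squared bias.
  Pairwise independence of the samples kills all cross covariances, so the variance part is
  weighted by squared quadrature weights; as the weights are bounded, it is at most a constant
  over \<open>m\<close> times the quadrature sum of \<open>p\<^sup>2\<close>, hence tends to \<open>0\<close>, while the bias tends
  to \<open>0\<close> by convergence of the rule.

  For the second claim, every summand of the kernel is the \<open>n\<close>-th derivative of
  \<open>\<tau>\<^bsup>\<kappa>+n\<^esup>(1-\<tau>)\<^bsup>\<mu>+n\<^esup>P(\<tau>)\<close>. Since both exponents exceed \<open>n - 1\<close>, this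
  function and its first \<open>n - 1\<close> derivatives vanish at \<open>0\<close> and \<open>1\<close>, so \<open>n\<close> integrations
  by parts show that the kernel is orthogonal to all polynomials of degree below \<open>n\<close>, and the
  mean of \<open>\<varpi>\<close> along the sampling segment is such a polynomial.
\<close>

definition weighted_poly :: "real \<Rightarrow> real \<Rightarrow> real poly \<Rightarrow> real \<Rightarrow> real" where
  "weighted_poly e f q t = t powr e * (1 - t) powr f * poly q t"

text \<open>Product rule: the derivative of \<open>t\<^bsup>e\<^esup>(1-t)\<^bsup>f\<^esup>q\<close> is
  \<open>t\<^bsup>e-1\<^esup>(1-t)\<^bsup>f-1\<^esup>(e(1-t)q - f t q + t(1-t)q')\<close>.\<close>
definition weighted_poly_deriv :: "real \<Rightarrow> real \<Rightarrow> real poly \<Rightarrow> real poly" where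
  "weighted_poly_deriv e f q =
     smult e ([:1,-1:] * q) - smult f ([:0,1:] * q) + [:0,1,-1:] * pderiv q"

lemma weighted_poly_0 [simp]: "weighted_poly e f q 0 = 0"
  and weighted_poly_1 [simp]: "weighted_poly e f q 1 = 0"
  by (auto simp: weighted_poly_def)

lemma continuous_on_weighted_poly:
  assumes "e > 0" "f > 0"
  shows "continuous_on {0..1} (weighted_poly e f q)"
  unfolding weighted_poly_def using assms
  by (intro continuous_intros continuous_on_powr') auto

lemma has_real_derivative_weighted_poly_interior:
  assumes "0 < x" "x < 1"
  shows "(weighted_poly e f q has_real_derivative
           weighted_poly (e - 1) (f - 1) (weighted_poly_deriv e f q) x) (at x)"
proof -
  have "((\<lambda>t. t powr e * (1 - t) powr f * poly q t) has_real_derivative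
     e * x powr (e-1) * (1-x) powr f * poly q x - f * x powr e * (1-x) powr (f-1) * poly q x
      + x powr e * (1-x) powr f * poly (pderiv q) x) (at x)"
    using assms by (auto intro!: derivative_eq_intros simp: algebra_simps)
  moreover have "x powr e = x powr (e-1) * x" using assms by (simp add: powr_diff)
  moreover have "(1-x) powr f = (1-x) powr (f-1) * (1-x)" using assms by (simp add: powr_diff)
  ultimately show ?thesis
    unfolding weighted_poly_def weighted_poly_deriv_def by (simp add: algebra_simps)
qed

lemma has_real_derivative_weighted_poly_at_0:
  assumes "e > 1"
  shows "(weighted_poly e f q has_real_derivative 0) (at 0 within {0..1})"
proof -
  have lim: "((\<lambda>y. y powr (e-1) * (1-y) powr f * poly q y) \<longlongrightarrow> 0) (at 0 within {0..1})"
    using assms by (intro tendsto_eq_intros) (auto simp: eventually_at_filter)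
  have "((\<lambda>y. (weighted_poly e f q y - weighted_poly e f q 0) / (y - 0)) \<longlongrightarrow> 0)
          (at 0 within {0..1})"
  proof (rule Lim_transform_within[OF lim])
    show "0 < (1::real)" by simp
    fix y :: real assume "y \<in> {0..1}" "0 < dist y 0"
    then have y: "y > 0" by auto
    then have "y powr e = y powr (e-1) * y" by (simp add: powr_diff)
    then show "y powr (e-1) * (1-y) powr f * poly q y
                 = (weighted_poly e f q y - weighted_poly e f q 0) / (y - 0)"
      using y by (simp add: weighted_poly_def)
  qed
  then show ?thesis by (simp add: has_field_derivative_iff)
qed


lemma has_real_derivative_weighted_poly_at_1:
  assumes "f > 1"
  shows "(weighted_poly e f q has_real_derivative 0) (at 1 within {0..1})"
proof -
  have lim: "((\<lambda>y. - (y powr e * (1-y) powr (f-1) * poly q y)) \<longlongrightarrow> 0) (at 1 within {0..1})"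
    using assms by (intro tendsto_eq_intros) (auto simp: eventually_at_filter)
  have "((\<lambda>y. (weighted_poly e f q y - weighted_poly e f q 1) / (y - 1)) \<longlongrightarrow> 0)
          (at 1 within {0..1})"
  proof (rule Lim_transform_within[OF lim])
    show "0 < (1::real)" by simp
    fix y :: real assume "y \<in> {0..1}" "0 < dist y 1"
    then have y: "y < 1" "y \<ge> 0" by (auto simp: dist_real_def)
    then have "(1-y) powr f = (1-y) powr (f-1) * (1-y)" by (simp add: powr_diff)
    then show "- (y powr e * (1-y) powr (f-1) * poly q y)
                 = (weighted_poly e f q y - weighted_poly e f q 1) / (y - 1)"
      using y by (simp add: weighted_poly_def divide_simps) (simp add: algebra_simps)
  qed
  then show ?thesis by (simp add: has_field_derivative_iff)
qed

lemma has_real_derivative_weighted_poly: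
  assumes "t \<in> {0..1}" "t \<in> {0<..<1} \<or> (e > 1 \<and> f > 1)"
  shows "(weighted_poly e f q has_real_derivative
           weighted_poly (e - 1) (f - 1) (weighted_poly_deriv e f q) t) (at t within {0..1})"
proof -
  consider "t = 0" | "t = 1" | "t \<in> {0<..<1}" using assms(1) by fastforce
  then show ?thesis
  proof cases
    case 1 then show ?thesis using assms has_real_derivative_weighted_poly_at_0[of e f q] by auto
  next
    case 2 then show ?thesis using assms has_real_derivative_weighted_poly_at_1[of f e q] by auto
  next
    case 3 then show ?thesis
      by (auto intro: has_field_derivative_at_within has_real_derivative_weighted_poly_interior)
  qed
qed

lemma vector_derivative_weighted_poly_rep:
  assumes g: "\<forall>x\<in>{0..1}. g x = weighted_poly e f q x"
    and t: "t \<in> {0..1}" "t \<in> {0<..<1} \<or> (e > 1 \<and> f > 1)"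
  shows "(g has_real_derivative vector_derivative g (at t within {0..1})) (at t within {0..1})"
    and "vector_derivative g (at t within {0..1})
           = weighted_poly (e - 1) (f - 1) (weighted_poly_deriv e f q) t"
proof -
  have "(g has_real_derivative weighted_poly (e - 1) (f - 1) (weighted_poly_deriv e f q) t)
          (at t within {0..1})"
    using has_real_derivative_weighted_poly[OF t, of q]
    by (rule has_field_derivative_transform_within[where d=1]) (use g t in auto)
  moreover from this show "vector_derivative g (at t within {0..1})
           = weighted_poly (e - 1) (f - 1) (weighted_poly_deriv e f q) t"
    using t(1) by (intro vector_derivative_within_closed_interval[of 0 1])
      (auto simp: has_real_derivative_iff_has_vector_derivative)
  ultimately show "(g has_real_derivative vector_derivative g (at t within {0..1}))
                     (at t within {0..1})"
    by simp
qed

text \<open>The exponents follow the convention \<open>w\<^bsup>a,b\<^esup>(t) = t\<^bsup>b\<^esup>(1-t)\<^bsup>a\<^esup>\<close>.\<close>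
locale weighted_poly_rep =
  fixes g :: "real \<Rightarrow> real" and a b :: real and n :: nat and Q :: "real poly"
  assumes rep: "\<And>t. t \<in> {0..1} \<Longrightarrow> g t = weighted_poly b a Q t"
    and exponents: "b > real n - 1" "a > real n - 1"
begin

lemma nderiv01_rep:
  "k < n \<Longrightarrow> \<exists>q. \<forall>t\<in>{0..1}. nderiv01 k g t = weighted_poly (b - k) (a - k) q t"
proof (induction k)
  case 0 then show ?case using rep by auto
next
  case (Suc k)
  then obtain q where q: "\<forall>t\<in>{0..1}. nderiv01 k g t = weighted_poly (b - k) (a - k) q t"
    by auto
  have "b - k > 1" "a - k > 1" using Suc.prems exponents by auto
  then have "nderiv01 (Suc k) g t
     = weighted_poly (b - Suc k) (a - Suc k) (weighted_poly_deriv (b - k) (a - k) q) t"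
    if "t \<in> {0..1}" for t
    using vector_derivative_weighted_poly_rep(2)[OF q that] by (simp add: diff_diff_eq add.commute)
  then show ?case by blast
qed

lemma continuous_on_nderiv01:
  assumes "k < n"
  shows "continuous_on {0..1} (nderiv01 k g)"
    and "nderiv01 k g 0 = 0" and "nderiv01 k g 1 = 0"
proof -
  obtain q where q: "\<forall>t\<in>{0..1}. nderiv01 k g t = weighted_poly (b - k) (a - k) q t"
    using nderiv01_rep assms by blast
  have "continuous_on {0..1} (weighted_poly (b - k) (a - k) q)"
    using exponents assms by (intro continuous_on_weighted_poly) auto
  then show "continuous_on {0..1} (nderiv01 k g)"
    using q by (metis (no_types, lifting) continuous_on_cong)
  show "nderiv01 k g 0 = 0" "nderiv01 k g 1 = 0" using q by auto
qed

lemma has_real_derivative_nderiv01: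
  assumes "k < n" "t \<in> {0<..<1}"
  shows "(nderiv01 k g has_real_derivative nderiv01 (Suc k) g t) (at t)"
proof -
  obtain q where q: "\<forall>t\<in>{0..1}. nderiv01 k g t = weighted_poly (b - k) (a - k) q t"
    using nderiv01_rep assms by blast
  have "(nderiv01 k g has_real_derivative nderiv01 (Suc k) g t) (at t within {0..1})"
    using vector_derivative_weighted_poly_rep(1)[OF q] assms(2) by simp
  then show ?thesis
    using assms(2) by (simp add: at_within_Icc_at)
qed

text \<open>Integration by parts \<open>k\<close> times; the boundary terms vanish.\<close>
lemma has_integral_nderiv01_mult_poly:
  "k \<le> n \<Longrightarrow> degree q < k \<Longrightarrow> ((\<lambda>t. nderiv01 k g t * poly q t) has_integral 0) {0..1}"
proof (induction k arbitrary: q)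
  case 0 then show ?case by simp
next
  case (Suc k)
  have k: "k < n" using Suc.prems by auto
  have by_parts: "((\<lambda>t. nderiv01 (Suc k) g t * poly q t + nderiv01 k g t * poly (pderiv q) t)
      has_integral (nderiv01 k g 1 * poly q 1 - nderiv01 k g 0 * poly q 0)) {0..1}"
  proof (rule fundamental_theorem_of_calculus_interior)
    show "continuous_on {0..1} (\<lambda>t. nderiv01 k g t * poly q t)"
      using continuous_on_nderiv01(1)[OF k] by (intro continuous_intros) auto
    fix t :: real assume t: "t \<in> {0<..<1}"
    show "((\<lambda>t. nderiv01 k g t * poly q t) has_vector_derivative
         nderiv01 (Suc k) g t * poly q t + nderiv01 k g t * poly (pderiv q) t) (at t)"
      unfolding has_real_derivative_iff_has_vector_derivative[symmetric]
      using has_real_derivative_nderiv01[OF k t] by (auto intro!: derivative_eq_intros poly_DERIV)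
  qed simp
  have "((\<lambda>t. nderiv01 k g t * poly (pderiv q) t) has_integral 0) {0..1}"
  proof (cases "pderiv q = 0")
    case False
    then have "degree (pderiv q) < k" using Suc.prems by (auto simp: degree_pderiv pderiv_eq_0_iff)
    then show ?thesis using Suc.IH k by simp
  qed simp
  from has_integral_diff[OF by_parts this]
  show ?case using continuous_on_nderiv01(2,3)[OF k] by simp
qed

end

lemma jac_P_eq_poly:
  "jac_P a b k t = poly (\<Sum>s=0..k. smult (((real k + a) gchoose s) * ((real k + b) gchoose (k - s)))
                          ([:-1,1:] ^ (k - s) * [:0,1:] ^ s)) t"
  by (simp add: jac_P_def poly_sum algebra_simps)

lemma has_integral_jac_kernel_mult_poly:
  assumes "\<kappa> > -1" "\<mu> > -1" "degree Q < n"
  shows "((\<lambda>\<tau>. jac_kernel \<kappa> \<mu> n N \<xi> \<beta> T \<tau> * poly Q \<tau>) has_integral 0) {0..1}"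
proof -
  define F where
    "F i = nderiv01 n (\<lambda>t. jac_w (\<mu> + n) (\<kappa> + n) t * jac_P (\<mu> + n) (\<kappa> + n) i t)" for i
  have F: "((\<lambda>\<tau>. F i \<tau> * poly Q \<tau>) has_integral 0) {0..1}" for i
  proof -
    obtain P where P: "\<And>t. jac_P (\<mu> + n) (\<kappa> + n) i t = poly P t"
      using jac_P_eq_poly by blast
    have "\<kappa> + n > 0" "\<mu> + n > 0" using assms by auto
    then interpret weighted_poly_rep
      "\<lambda>t. jac_w (\<mu> + n) (\<kappa> + n) t * jac_P (\<mu> + n) (\<kappa> + n) i t" "\<mu> + n" "\<kappa> + n" n P
      using assms by unfold_locales (auto simp: jac_w_def rpow_def weighted_poly_def P)
    show ?thesis
      using has_integral_nderiv01_mult_poly[of n Q] assms(3) by (simp add: F_def)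
  qed
  define c where "c i = jac_P (\<mu> + n) (\<kappa> + n) i \<xi> / jac_norm2 (\<mu> + n) (\<kappa> + n) i" for i
  have "(\<lambda>\<tau>. jac_kernel \<kappa> \<mu> n N \<xi> \<beta> T \<tau> * poly Q \<tau>) =
     (\<lambda>\<tau>. (-1)^n / (\<beta>*T)^n * (\<Sum>i=0..N-n. c i * (F i \<tau> * poly Q \<tau>)))"
    unfolding jac_kernel_def c_def F_def
    by (rule ext) (simp add: sum_distrib_right sum_distrib_left mult_ac)
  moreover have "((\<lambda>\<tau>. (-1)^n / (\<beta>*T)^n * (\<Sum>i=0..N-n. c i * (F i \<tau> * poly Q \<tau>)))
      has_integral ((-1)^n / (\<beta>*T)^n * (\<Sum>i=0..N-n. c i * 0))) {0..1}"
    by (intro has_integral_mult_right has_integral_sum F) auto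
  ultimately show ?thesis by simp
qed

lemma has_integral_jac_kernel_mult_affine_poly:
  assumes "\<kappa> > -1" "\<mu> > -1"
  shows "((\<lambda>\<tau>. jac_kernel \<kappa> \<mu> n N \<xi> \<beta> T \<tau> * (\<Sum>i<n. \<nu> i * (c + d * \<tau>) ^ i))
           has_integral 0) {0..1}"
proof (cases "n = 0")
  case False
  define Q where "Q = pcompose (\<Sum>i<n. monom (\<nu> i) i) [:c, d:]"
  have "degree Q \<le> degree (\<Sum>i<n. monom (\<nu> i) i)"
    using degree_pcompose_le[of "\<Sum>i<n. monom (\<nu> i) i" "[:c, d:]"] by (auto simp: Q_def split: if_splits)
  also have "\<dots> \<le> n - 1"
    by (rule degree_sum_le) (auto simp: degree_monom_le intro: order.trans[OF degree_monom_le])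
  finally have "degree Q < n" using False by linarith
  moreover have poly_Q: "poly Q \<tau> = (\<Sum>i<n. \<nu> i * (c + d * \<tau>) ^ i)" for \<tau>
    by (simp add: Q_def poly_pcompose poly_sum poly_monom mult.commute)
  ultimately show ?thesis
    using has_integral_jac_kernel_mult_poly[OF assms, of Q n N \<xi> \<beta> T] by (simp add: poly_Q)
qed simp

lemma frac_in_unit_interval: "i \<le> m \<Longrightarrow> real i / real m \<in> {0..1}"
  by (cases "m = 0") (auto simp: divide_simps)

lemma affine_nonneg_on_unit_interval:
  fixes a d \<tau> :: real
  assumes "0 \<le> a" "0 \<le> a + d" "\<tau> \<in> {0..1}"
  shows "0 \<le> a + d * \<tau>"
proof -
  have "0 \<le> (1 - \<tau>) * a" "0 \<le> \<tau> * (a + d)" using assms by auto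
  then show ?thesis by (simp add: algebra_simps)
qed

text \<open>Squaring the weights gains a factor \<open>B / m\<close> over a convergent quadrature sum.\<close>
lemma quad_sum_sq_weights_tendsto_0:
  fixes qw v :: "nat \<Rightarrow> nat \<Rightarrow> real" and f :: "real \<Rightarrow> real"
  assumes conv: "quad_conv qw f"
    and qw: "\<And>m i. i \<le> m \<Longrightarrow> 0 \<le> qw m i" "\<And>m i. i \<le> m \<Longrightarrow> qw m i \<le> B"
    and f: "\<And>t. t \<in> {0..1} \<Longrightarrow> 0 \<le> f t"
    and v: "\<And>m i. i \<le> m \<Longrightarrow> 0 \<le> v m i" "\<And>m i. i \<le> m \<Longrightarrow> v m i \<le> V"
  shows "(\<lambda>m. \<Sum>i=0..m. (qw m i / m)^2 * f (i / m) * v m i) \<longlonglongrightarrow> 0"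
proof (rule tendsto_sandwich)
  have "0 \<le> B" using qw[of 0 0] by linarith
  define S where "S m = (\<Sum>i=0..m. qw m i / m * f (i / m))" for m
  have term_bound: "(qw m i / m)^2 * f (i / m) * v m i \<le> qw m i / m * f (i / m) * (B * V / m)"
    and term_nonneg: "0 \<le> (qw m i / m)^2 * f (i / m) * v m i"
    if "i \<le> m" for m i
  proof -
    have "0 \<le> qw m i / m" "0 \<le> f (i / m)" using qw(1) f frac_in_unit_interval that by auto
    moreover have "qw m i / m * v m i \<le> B / m * V"
      using qw v that \<open>0 \<le> B\<close> by (intro mult_mono divide_right_mono) auto
    ultimately have "qw m i / m * f (i / m) * (qw m i / m * v m i)
        \<le> qw m i / m * f (i / m) * (B / m * V)"
      by (intro mult_left_mono mult_nonneg_nonneg)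
    then show "(qw m i / m)^2 * f (i / m) * v m i \<le> qw m i / m * f (i / m) * (B * V / m)"
      by (simp add: power2_eq_square mult_ac)
    show "0 \<le> (qw m i / m)^2 * f (i / m) * v m i"
      using \<open>0 \<le> f (i / m)\<close> v(1) that by simp
  qed
  show "\<forall>\<^sub>F m in sequentially. 0 \<le> (\<Sum>i=0..m. (qw m i / m)^2 * f (i / m) * v m i)"
    using term_nonneg by (intro always_eventually allI sum_nonneg) auto
  show "\<forall>\<^sub>F m in sequentially.
      (\<Sum>i=0..m. (qw m i / m)^2 * f (i / m) * v m i) \<le> S m * (B * V / m)"
    unfolding S_def sum_distrib_right by (intro always_eventually allI sum_mono term_bound) simp
  have "(\<lambda>m. S m * (B * V / m)) \<longlonglongrightarrow> integral {0..1} f * 0"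
    using conv unfolding quad_conv_def S_def by (intro tendsto_intros)
  then show "(\<lambda>m. S m * (B * V / m)) \<longlonglongrightarrow> 0" by simp
qed simp

lemma square_integrable_mult:
  fixes f g :: "'a \<Rightarrow> real"
  assumes "f \<in> borel_measurable M" "integrable M (\<lambda>x. (f x)^2)"
    and "g \<in> borel_measurable M" "integrable M (\<lambda>x. (g x)^2)"
  shows "integrable M (\<lambda>x. f x * g x)"
proof (rule Bochner_Integration.integrable_bound[OF Bochner_Integration.integrable_add[OF assms(2,4)]])
  show "(\<lambda>x. f x * g x) \<in> borel_measurable M" using assms(1,3) by measurable
  have "\<bar>u * v\<bar> \<le> u^2 + v^2" for u v :: real
  proof -
    have "0 \<le> \<bar>u\<bar> * \<bar>v\<bar>" by simp
    moreover have "2 * (\<bar>u\<bar> * \<bar>v\<bar>) \<le> u^2 + v^2"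
      using sum_squares_bound[of "\<bar>u\<bar>" "\<bar>v\<bar>"] by (simp add: mult.assoc)
    ultimately show ?thesis unfolding abs_mult by linarith
  qed
  then show "AE x in M. norm (f x * g x) \<le> norm ((f x)^2 + (g x)^2)" by simp
qed

context prob_space
begin

lemma expectation_mult_centered_indep:
  fixes Y Z :: "'a \<Rightarrow> real"
  assumes "indep_var borel Y borel Z" "integrable M Y" "integrable M Z"
  shows "expectation (\<lambda>x. (Y x - expectation Y) * (Z x - expectation Z)) = 0"
proof -
  have "indep_var borel ((\<lambda>y. y - expectation Y) \<circ> Y) borel ((\<lambda>z. z - expectation Z) \<circ> Z)"
    by (rule indep_var_compose[OF assms(1)]) auto
  then have "expectation (\<lambda>x. (Y x - expectation Y) * (Z x - expectation Z))
      = expectation (\<lambda>x. Y x - expectation Y) * expectation (\<lambda>x. Z x - expectation Z)"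
    using assms(2,3) by (intro indep_var_lebesgue_integral) (auto simp: comp_def)
  also have "\<dots> = 0" using assms(2,3) by (simp add: prob_space)
  finally show ?thesis .
qed

text \<open>Pairwise independence suffices: only the diagonal covariances survive.\<close>
lemma expectation_sq_lincomb_indep:
  fixes Y :: "nat \<Rightarrow> 'a \<Rightarrow> real" and S :: "nat set"
  assumes "finite S"
    and meas: "\<And>i. i \<in> S \<Longrightarrow> Y i \<in> borel_measurable M"
    and sq: "\<And>i. i \<in> S \<Longrightarrow> integrable M (\<lambda>x. (Y i x)^2)"
    and indep: "\<And>i j. i \<in> S \<Longrightarrow> j \<in> S \<Longrightarrow> i \<noteq> j \<Longrightarrow> indep_var borel (Y i) borel (Y j)"
  shows "expectation (\<lambda>x. ((\<Sum>i\<in>S. c i * Y i x) - L)^2) =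
     (\<Sum>i\<in>S. (c i)^2 * variance (Y i)) + ((\<Sum>i\<in>S. c i * expectation (Y i)) - L)^2"
proof -
  define Z where "Z i = (\<lambda>x. Y i x - expectation (Y i))" for i
  define d where "d = (\<Sum>i\<in>S. c i * expectation (Y i)) - L"
  have int_Y: "integrable M (Y i)" if "i \<in> S" for i
    using square_integrable_imp_integrable meas sq that by blast
  have int_Z: "integrable M (Z i)" if "i \<in> S" for i
    using int_Y[OF that] by (simp add: Z_def)
  have sq_Z: "integrable M (\<lambda>x. (Z i x)^2)" if "i \<in> S" for i
    using sq[OF that] int_Y[OF that] by (simp add: Z_def power2_diff)
  have int_ZZ: "integrable M (\<lambda>x. Z i x * Z j x)" if "i \<in> S" "j \<in> S" for i j
    using that meas by (intro square_integrable_mult sq_Z) (auto simp: Z_def)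
  have EZ: "expectation (Z i) = 0" if "i \<in> S" for i
    using int_Y[OF that] by (simp add: Z_def prob_space)
  have EZZ: "expectation (\<lambda>x. Z i x * Z j x) = (if i = j then variance (Y i) else 0)"
    if "i \<in> S" "j \<in> S" for i j
    using expectation_mult_centered_indep[OF indep int_Y int_Y] that
    by (simp add: Z_def power2_eq_square)
  have expand: "((\<Sum>i\<in>S. c i * Y i x) - L)^2 =
     (\<Sum>i\<in>S. \<Sum>j\<in>S. c i * c j * (Z i x * Z j x)) + 2 * d * (\<Sum>i\<in>S. c i * Z i x) + d^2" for x
  proof -
    have "(\<Sum>i\<in>S. c i * Y i x) - L = (\<Sum>i\<in>S. c i * Z i x) + d"
      by (simp add: Z_def d_def right_diff_distrib sum_subtractf)
    then show ?thesis
      by (simp add: power2_eq_square algebra_simps sum_product)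
  qed
  have "expectation (\<lambda>x. ((\<Sum>i\<in>S. c i * Y i x) - L)^2)
      = (\<Sum>i\<in>S. \<Sum>j\<in>S. c i * c j * expectation (\<lambda>x. Z i x * Z j x))
        + 2 * d * (\<Sum>i\<in>S. c i * expectation (Z i)) + d^2"
    unfolding expand using int_Z int_ZZ
    by (simp add: Bochner_Integration.integral_add Bochner_Integration.integral_sum
        Bochner_Integration.integrable_sum prob_space)
  also have "\<dots> = (\<Sum>i\<in>S. (c i)^2 * variance (Y i)) + d^2"
  proof -
    have "(\<Sum>i\<in>S. \<Sum>j\<in>S. c i * c j * expectation (\<lambda>x. Z i x * Z j x))
        = (\<Sum>i\<in>S. \<Sum>j\<in>S. if j = i then (c i)^2 * variance (Y i) else 0)"
      using EZZ by (intro sum.cong refl) (auto simp: power2_eq_square)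
    then show ?thesis using EZ \<open>finite S\<close> by simp
  qed
  finally show ?thesis by (simp add: d_def)
qed


lemma expectation_sq_noise_err:
  fixes X :: "real \<Rightarrow> 'a \<Rightarrow> real"
  assumes nodes: "\<And>\<tau>. \<tau> \<in> {0..1} \<Longrightarrow> t0 + \<beta> * T * \<tau> \<ge> 0" and "\<beta> * T \<noteq> 0"
    and rv: "\<And>t. t \<ge> 0 \<Longrightarrow> X t \<in> borel_measurable M"
    and L2: "\<And>t. t \<ge> 0 \<Longrightarrow> integrable M (\<lambda>x. (X t x)^2)"
    and indep: "\<And>s t. s \<ge> 0 \<Longrightarrow> t \<ge> 0 \<Longrightarrow> s \<noteq> t \<Longrightarrow> indep_var borel (X s) borel (X t)"
  shows "expectation (\<lambda>x. (noise_err qw p X \<beta> T t0 m x - L)^2)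
    = (\<Sum>i=0..m. (qw m i / m)^2 * (p (i / m))^2 * variance (X (t0 + \<beta> * T * (i / m))))
      + ((\<Sum>i=0..m. qw m i / m * (p (i / m) * expectation (X (t0 + \<beta> * T * (i / m))))) - L)^2"
proof -
  define s where "s i = t0 + \<beta> * T * (i / m)" for i :: nat
  have s_nonneg: "s i \<ge> 0" if "i \<in> {0..m}" for i
    using nodes[OF frac_in_unit_interval[of i m]] that by (simp add: s_def)
  have s_inj: "s i \<noteq> s j" if "i \<in> {0..m}" "j \<in> {0..m}" "i \<noteq> j" for i j
    using that \<open>\<beta> * T \<noteq> 0\<close> by (auto simp: s_def divide_simps)
  have "expectation (\<lambda>x. (noise_err qw p X \<beta> T t0 m x - L)^2)
      = expectation (\<lambda>x. ((\<Sum>i=0..m. qw m i / m * p (i / m) * X (s i) x) - L)^2)"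
    by (simp add: noise_err_def s_def)
  also have "\<dots> = (\<Sum>i=0..m. (qw m i / m * p (i / m))^2 * variance (X (s i)))
      + ((\<Sum>i=0..m. qw m i / m * p (i / m) * expectation (X (s i))) - L)^2"
    by (rule expectation_sq_lincomb_indep) (use rv L2 indep s_nonneg s_inj in auto)
  finally show ?thesis by (simp only: s_def power_mult_distrib mult.assoc)
qed

lemma ms_conv_noise_err:
  fixes X :: "real \<Rightarrow> 'a \<Rightarrow> real"
  assumes nodes: "\<And>\<tau>. \<tau> \<in> {0..1} \<Longrightarrow> t0 + \<beta> * T * \<tau> \<ge> 0" and "\<beta> * T \<noteq> 0"
    and rv: "\<And>t. t \<ge> 0 \<Longrightarrow> X t \<in> borel_measurable M"
    and L2: "\<And>t. t \<ge> 0 \<Longrightarrow> integrable M (\<lambda>x. (X t x)^2)"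
    and var_cont: "continuous_on {0..} (\<lambda>t. variance (X t))"
    and indep: "\<And>s t. s \<ge> 0 \<Longrightarrow> t \<ge> 0 \<Longrightarrow> s \<noteq> t \<Longrightarrow> indep_var borel (X s) borel (X t)"
    and qw: "\<And>m i. i \<le> m \<Longrightarrow> 0 \<le> qw m i" "\<And>m i. i \<le> m \<Longrightarrow> qw m i \<le> B"
    and conv_sq: "quad_conv qw (\<lambda>\<tau>. (p \<tau>)^2)"
    and conv_mean: "quad_conv qw (\<lambda>\<tau>. p \<tau> * expectation (X (t0 + \<beta> * T * \<tau>)))"
  shows "ms_conv M (noise_err qw p X \<beta> T t0)
           (integral {0..1} (\<lambda>\<tau>. p \<tau> * expectation (X (t0 + \<beta> * T * \<tau>))))"
proof -
  define L where "L = integral {0..1} (\<lambda>\<tau>. p \<tau> * expectation (X (t0 + \<beta> * T * \<tau>)))"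
  have "continuous_on {0..1} (\<lambda>\<tau>. variance (X (t0 + \<beta> * T * \<tau>)))"
    by (rule continuous_on_compose2[OF var_cont]) (use nodes in \<open>auto intro: continuous_intros\<close>)
  from continuous_attains_sup[OF compact_Icc _ this] obtain \<tau>\<^sub>0 where
    V: "\<forall>\<tau>\<in>{0..1}. variance (X (t0 + \<beta> * T * \<tau>)) \<le> variance (X (t0 + \<beta> * T * \<tau>\<^sub>0))"
    by blast
  have variance_part:
    "(\<lambda>m. \<Sum>i=0..m. (qw m i / m)^2 * (p (i / m))^2 * variance (X (t0 + \<beta> * T * (i / m))))
       \<longlonglongrightarrow> 0"
  proof (rule quad_sum_sq_weights_tendsto_0[OF conv_sq qw])
    show "variance (X (t0 + \<beta> * T * (i / m))) \<le> variance (X (t0 + \<beta> * T * \<tau>\<^sub>0))"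
      if "i \<le> m" for m i :: nat
      using V frac_in_unit_interval[OF that] by blast
  qed (simp_all add: variance_positive)
  have bias_part:
    "(\<lambda>m. \<Sum>i=0..m. qw m i / m * (p (i / m) * expectation (X (t0 + \<beta> * T * (i / m))))) \<longlonglongrightarrow> L"
    using conv_mean by (simp add: quad_conv_def L_def)
  have mean_square_error: "expectation (\<lambda>x. (noise_err qw p X \<beta> T t0 m x - L)^2)
      = (\<Sum>i=0..m. (qw m i / m)^2 * (p (i / m))^2 * variance (X (t0 + \<beta> * T * (i / m))))
        + ((\<Sum>i=0..m. qw m i / m * (p (i / m) * expectation (X (t0 + \<beta> * T * (i / m))))) - L)^2"
    for m
    by (rule expectation_sq_noise_err) (use nodes \<open>\<beta> * T \<noteq> 0\<close> rv L2 indep in auto)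
  have "(\<lambda>m. expectation (\<lambda>x. (noise_err qw p X \<beta> T t0 m x - L)^2)) \<longlonglongrightarrow> 0 + (L - L)^2"
    unfolding mean_square_error
    by (intro tendsto_add tendsto_power tendsto_diff variance_part bias_part tendsto_const)
  then show ?thesis by (simp add: ms_conv_def L_def)
qed

end

theorem corollary2:
  fixes M :: "'w measure" and X :: "real \<Rightarrow> 'w \<Rightarrow> real"
    and I :: "real set" and n N :: nat and \<beta> \<xi> t0 T \<kappa> \<mu> :: real
    and qw :: "nat \<Rightarrow> nat \<Rightarrow> real"
  defines "p \<equiv> jac_kernel \<kappa> \<mu> n N \<xi> \<beta> T"
  assumes P: "prob_space M"
    and I: "is_interval I" "open I" "I \<subseteq> {0..}"
    and beta: "\<beta> \<in> {-1, 1}" and nN: "N \<ge> n" and xi: "\<xi> \<in> {0..1}"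
    and t0: "t0 \<in> I" and T: "T > 0" "t0 + \<beta> * T \<in> I"
    and rv: "\<And>t. t \<ge> 0 \<Longrightarrow> X t \<in> borel_measurable M"
    and L2: "\<And>t. t \<ge> 0 \<Longrightarrow> integrable M (\<lambda>x. (X t x)^2)"
    and mean_cont: "continuous_on {0..} (\<lambda>t. prob_space.expectation M (X t))"
    and var_cont: "continuous_on {0..} (\<lambda>t. prob_space.variance M (X t))"
    and indep: "\<And>s t. s \<ge> 0 \<Longrightarrow> t \<ge> 0 \<Longrightarrow> s \<noteq> t \<Longrightarrow>
                  prob_space.indep_var M borel (X s) borel (X t)"
    and w_pos: "\<And>m i. 0 < i \<Longrightarrow> i < m \<Longrightarrow> qw m i > 0"
    and w_end: "\<And>m. qw m 0 \<ge> 0" "\<And>m. qw m m \<ge> 0"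
    and w_kappa: "\<kappa> < 0 \<Longrightarrow> (\<forall>m. qw m 0 = 0)"
    and w_mu: "\<mu> < 0 \<Longrightarrow> (\<forall>m. qw m m = 0)"
    and w_bdd: "\<exists>B. \<forall>m i. i \<le> m \<longrightarrow> \<bar>qw m i\<bar> \<le> B"
    and conv1: "quad_conv qw (\<lambda>\<tau>. (p \<tau>)^2)"
    and conv2: "quad_conv qw (\<lambda>\<tau>. p \<tau> * prob_space.expectation M (X (t0 + \<beta> * T * \<tau>)))"
    and kappa: "\<kappa> > -1/2" and mu: "\<mu> > -1/2"
  shows "ms_conv M (noise_err qw p X \<beta> T t0)
           (integral {0..1} (\<lambda>\<tau>. p \<tau> * prob_space.expectation M (X (t0 + \<beta> * T * \<tau>))))
       \<and> ((\<exists>\<nu>::nat \<Rightarrow> real. \<forall>\<tau>\<ge>0. prob_space.expectation M (X \<tau>) = (\<Sum>i<n. \<nu> i * \<tau> ^ i))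
            \<longrightarrow> ms_conv M (noise_err qw p X \<beta> T t0) 0)"
proof -
  interpret prob_space M by (rule P)
  have nodes: "t0 + \<beta> * T * \<tau> \<ge> 0" if "\<tau> \<in> {0..1}" for \<tau>
    using affine_nonneg_on_unit_interval[OF _ _ that] I(3) t0 T(2) by auto
  obtain B where "\<forall>m i. i \<le> m \<longrightarrow> \<bar>qw m i\<bar> \<le> B" using w_bdd by blast
  moreover have "0 \<le> qw m i" if "i \<le> m" for m i
    using w_pos[of i m] w_end that by (cases "i = 0 \<or> i = m") auto
  ultimately have conv_L: "ms_conv M (noise_err qw p X \<beta> T t0)
      (integral {0..1} (\<lambda>\<tau>. p \<tau> * expectation (X (t0 + \<beta> * T * \<tau>))))"
    using beta T conv1 conv2
    by (intro ms_conv_noise_err[OF nodes _ rv L2 var_cont indep, of qw B]) auto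
  have L_eq_0: "integral {0..1} (\<lambda>\<tau>. p \<tau> * expectation (X (t0 + \<beta> * T * \<tau>))) = 0"
    if "\<forall>\<tau>\<ge>0. expectation (X \<tau>) = (\<Sum>i<n. \<nu> i * \<tau> ^ i)" for \<nu>
  proof -
    have "integral {0..1} (\<lambda>\<tau>. p \<tau> * expectation (X (t0 + \<beta> * T * \<tau>)))
        = integral {0..1} (\<lambda>\<tau>. p \<tau> * (\<Sum>i<n. \<nu> i * (t0 + \<beta> * T * \<tau>) ^ i))"
      using that nodes by (intro integral_cong) auto
    also have "\<dots> = 0"
      using has_integral_jac_kernel_mult_affine_poly kappa mu unfolding p_def
      by (intro integral_unique) auto
    finally show ?thesis .
  qed
  show ?thesis
  proof (intro conjI impI)
    assume "\<exists>\<nu>. \<forall>\<tau>\<ge>0. expectation (X \<tau>) = (\<Sum>i<n. \<nu> i * \<tau> ^ i)"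
    then obtain \<nu> where mean: "\<forall>\<tau>\<ge>0. expectation (X \<tau>) = (\<Sum>i<n. \<nu> i * \<tau> ^ i)" by blast
    from conv_L show "ms_conv M (noise_err qw p X \<beta> T t0) 0" unfolding L_eq_0[OF mean] .
  qed (fact conv_L)
qed

end
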